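(* Let $(\mathfrak{h},[\;,\;],\langle\;,\;\rangle)$ be a $\lambda$-Einstein Lorentzian nilpotent Lie algebra with non-degenerate center $\mathrm{Z}(\mathfrak{h})$, and let $\mathfrak{g}$, $[\;,\;]_{\mathfrak{g}}$, $\omega$ be as in the context. If $\lambda\neq0$, then the cohomology class of $\omega$ is non-trivial, i.e., there is no linear map $\alpha:\mathfrak{g}\to\mathrm{Z}(\mathfrak{h})$ with $\omega(u,v)=-\alpha([u,v]_{\mathfrak{g}})$ for all $u,v\in\mathfrak{g}$. In particular, $H^2(\mathfrak{g},\mathrm{Z}(\mathfrak{h}))\neq\{0\}$ (cohomology of $(\mathfrak{g},[\;,\;]_{\mathfrak{g}})$ with values in the trivial module $\mathrm{Z}(\mathfrak{h})$).
   Context: Lorentzian means a nondegenerate symmetric bilinear form of signature $(1,n-1)$. With $\mathrm{Z}(\mathfrak{h})$ nondegenerate, put $\mathfrak{g}=\mathrm{Z}(\mathfrak{h})^\perp$; for $u,v\in\mathfrak{g}$ write $[u,v]=[u,v]_{\mathfrak{g}}+\omega(u,v)$ with $[u,v]_{\mathfrak{g}}\in\mathfrak{g}$, $\omega(u,v)\in\mathrm{Z}(\mathfrak{h})$; then $(\mathfrak{g},[\;,\;]_{\mathfrak{g}})$ is a Lie algebra and $\omega$ is a $2$-cocycle of it with values in $\mathrm{Z}(\mathfrak{h})$ (trivial action). Ricci operator: Levi-Civita product $2\langle \mathrm{L}_uv,w\rangle=\langle[u,v],w\rangle+\langle[w,u],v\rangle+\langle[w,v],u\rangle$, $K(u,v)=\mathrm{L}_{[u,v]}-[\mathrm{L}_u,\mathrm{L}_v]$,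 $\langle\mathrm{Ric}\,u,v\rangle=\mathrm{tr}(w\mapsto K(u,w)v)$; $\lambda$-Einstein means $\mathrm{Ric}=\lambda\,\mathrm{Id}$. *)

theory Defs
  imports "HOL-Analysis.Analysis"
begin

text \<open>A finite-dimensional real vector space is modelled by a type 'a of class euclidean_space;
  a Lie bracket is a bilinear map br, a metric is a bilinear form B.\<close>

definition lie_algebra :: "('a::euclidean_space \<Rightarrow> 'a \<Rightarrow> 'a) \<Rightarrow> bool" where
  "lie_algebra br \<longleftrightarrow> bilinear br \<and> (\<forall>x. br x x = 0) \<and>
     (\<forall>x y z. br x (br y z) + br y (br z x) + br z (br x y) = 0)"

fun lower_central :: "('a::euclidean_space \<Rightarrow> 'a \<Rightarrow> 'a) \<Rightarrow> nat \<Rightarrow> 'a set" where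
  "lower_central br 0 = UNIV"
| "lower_central br (Suc k) = span {br x y | x y. y \<in> lower_central br k}"

definition nilpotent_lie :: "('a::euclidean_space \<Rightarrow> 'a \<Rightarrow> 'a) \<Rightarrow> bool" where
  "nilpotent_lie br \<longleftrightarrow> lie_algebra br \<and> (\<exists>k. lower_central br k = {0})"

definition lie_center :: "('a::euclidean_space \<Rightarrow> 'a \<Rightarrow> 'a) \<Rightarrow> 'a set" where
  "lie_center br = {z. \<forall>x. br z x = 0}"

text \<open>Lorentzian: symmetric bilinear form of signature (1, n-1), n = DIM('a):
  in suitable linear coordinates T it is -x_1 y_1 + x_2 y_2 + ... + x_n y_n.\<close>
definition lorentzian :: "('a::euclidean_space \<Rightarrow> 'a \<Rightarrow> real) \<Rightarrow> bool" where
  "lorentzian B \<longleftrightarrow> bilinear B \<and> (\<forall>x y. B x y = B y x) \<and>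
     (\<exists>(T::'a \<Rightarrow> 'a) b0. linear T \<and> bij T \<and> b0 \<in> Basis \<and>
        (\<forall>x y. B (T x) (T y) = x \<bullet> y - 2 * (x \<bullet> b0) * (y \<bullet> b0)))"

definition nondegenerate_on :: "('a::zero \<Rightarrow> 'a \<Rightarrow> real) \<Rightarrow> 'a set \<Rightarrow> bool" where
  "nondegenerate_on B S \<longleftrightarrow> (\<forall>z\<in>S. (\<forall>w\<in>S. B z w = 0) \<longrightarrow> z = 0)"

definition orth_compl :: "('a \<Rightarrow> 'a \<Rightarrow> real) \<Rightarrow> 'a set \<Rightarrow> 'a set" where
  "orth_compl B S = {u. \<forall>z\<in>S. B u z = 0}"

definition levi_civita :: "('a::euclidean_space \<Rightarrow> 'a \<Rightarrow> 'a) \<Rightarrow> ('a \<Rightarrow> 'a \<Rightarrow> real) \<Rightarrow> 'a \<Rightarrow> 'a \<Rightarrow> 'a" where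
  "levi_civita br B u v = (THE x. \<forall>w. 2 * B x w = B (br u v) w + B (br w u) v + B (br w v) u)"

definition curvature :: "('a::euclidean_space \<Rightarrow> 'a \<Rightarrow> 'a) \<Rightarrow> ('a \<Rightarrow> 'a \<Rightarrow> real) \<Rightarrow> 'a \<Rightarrow> 'a \<Rightarrow> 'a \<Rightarrow> 'a" where
  "curvature br B u v w = levi_civita br B (br u v) w
     - (levi_civita br B u (levi_civita br B v w) - levi_civita br B v (levi_civita br B u w))"

definition trace_op :: "('a::euclidean_space \<Rightarrow> 'a) \<Rightarrow> real" where
  "trace_op f = (\<Sum>b\<in>Basis. f b \<bullet> b)"

definition ricci :: "('a::euclidean_space \<Rightarrow> 'a \<Rightarrow> 'a) \<Rightarrow> ('a \<Rightarrow> 'a \<Rightarrow> real) \<Rightarrow> 'a \<Rightarrow> 'a" where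
  "ricci br B u = (THE x. \<forall>v. B x v = trace_op (\<lambda>w. curvature br B u w v))"

definition einstein :: "('a::euclidean_space \<Rightarrow> 'a \<Rightarrow> 'a) \<Rightarrow> ('a \<Rightarrow> 'a \<Rightarrow> real) \<Rightarrow> real \<Rightarrow> bool" where
  "einstein br B lam \<longleftrightarrow> (\<forall>u. ricci br B u = lam *\<^sub>R u)"

text \<open>Decomposition h = g \<oplus> Z(h) with g = Z(h)^perp: Z-component of a vector.\<close>
definition center_part :: "('a::euclidean_space \<Rightarrow> 'a \<Rightarrow> 'a) \<Rightarrow> ('a \<Rightarrow> 'a \<Rightarrow> real) \<Rightarrow> 'a \<Rightarrow> 'a" where
  "center_part br B x = (THE z. z \<in> lie_center br \<and> x - z \<in> orth_compl B (lie_center br))"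

definition bracket_g :: "('a::euclidean_space \<Rightarrow> 'a \<Rightarrow> 'a) \<Rightarrow> ('a \<Rightarrow> 'a \<Rightarrow> real) \<Rightarrow> 'a \<Rightarrow> 'a \<Rightarrow> 'a" where
  "bracket_g br B u v = br u v - center_part br B (br u v)"

definition omega_cocycle :: "('a::euclidean_space \<Rightarrow> 'a \<Rightarrow> 'a) \<Rightarrow> ('a \<Rightarrow> 'a \<Rightarrow> real) \<Rightarrow> 'a \<Rightarrow> 'a \<Rightarrow> 'a" where
  "omega_cocycle br B u v = center_part br B (br u v)"

definition linear_on_set :: "'a set \<Rightarrow> ('a::real_vector \<Rightarrow> 'b::real_vector) \<Rightarrow> bool" where
  "linear_on_set S f \<longleftrightarrow> (\<forall>x\<in>S. \<forall>y\<in>S. f (x + y) = f x + f y) \<and> (\<forall>c. \<forall>x\<in>S. f (c *\<^sub>R x) = c *\<^sub>R f x)"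

end

theory Submission
  imports Defs
begin

text \<open>
  Nilpotent Lie algebras are unimodular, and for a central vector z and a vector y orthogonal to
  the derived algebra [h,h] a trace computation with the Koszul formula then gives
  <Ric z, y> = 0. So if Ric = \<lambda> Id with \<lambda> \<noteq> 0, every central vector is orthogonal to
  [h,h]^\<perp>. On the other hand, if \<omega> = -\<alpha> \<circ> [ , ]_g then every bracket
  [u,v] = [u,v]_g - \<alpha>([u,v]_g) lies in the graph \<Gamma> of -\<alpha>, a subspace meeting Z(h) only in 0.
  As Z(h) \<noteq> 0, a nonzero central z lies outside \<Gamma>, so some y \<perp> \<Gamma> \<supseteq> [h,h] has
  <y, z> \<noteq> 0, a contradiction.
\<close>

section \<open>Traces and orthogonal projections\<close>

lemma trace_op_add: "trace_op (\<lambda>w. f w + g w) = trace_op f + trace_op g"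
  by (simp add: trace_op_def inner_add_left sum.distrib)

lemma trace_op_diff: "trace_op (\<lambda>w. f w - g w) = trace_op f - trace_op g"
  by (simp add: trace_op_def inner_diff_left sum_subtractf)

lemma trace_op_uminus: "trace_op (\<lambda>w. - f w) = - trace_op f"
  by (simp add: trace_op_def sum_negf)

lemma trace_op_scaleR: "trace_op (\<lambda>w. c *\<^sub>R f w) = c * trace_op f"
  by (simp add: trace_op_def sum_distrib_left)

lemma trace_op_compose_expand:
  assumes "linear f"
  shows "trace_op (\<lambda>w. f (g w)) = (\<Sum>b\<in>Basis. \<Sum>c\<in>Basis. (g b \<bullet> c) * (f c \<bullet> b))"
proof -
  have "f (g b) \<bullet> b = (\<Sum>c\<in>Basis. (g b \<bullet> c) * (f c \<bullet> b))" for b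
  proof -
    have "f (g b) = f (\<Sum>c\<in>Basis. (g b \<bullet> c) *\<^sub>R c)"
      by (simp add: euclidean_representation)
    also have "\<dots> = (\<Sum>c\<in>Basis. (g b \<bullet> c) *\<^sub>R f c)"
      using assms by (simp add: linear_sum linear_scale)
    finally show ?thesis
      by (simp add: inner_sum_left)
  qed
  then show ?thesis
    by (simp add: trace_op_def)
qed

lemma trace_op_compose_commute:
  assumes "linear f" "linear g"
  shows "trace_op (\<lambda>w. f (g w)) = trace_op (\<lambda>w. g (f w))"
  unfolding trace_op_compose_expand[OF assms(1)] trace_op_compose_expand[OF assms(2)]
  by (subst sum.swap) (simp add: mult.commute)

lemma trace_op_idempotent_compose_eq_0:
  assumes "linear P" "linear f" "\<And>x. P (P x) = P x" "\<And>x. P (f (P x)) = 0"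
  shows "trace_op (\<lambda>w. P (f w)) = 0"
proof -
  have "trace_op (\<lambda>w. P (f w)) = trace_op (\<lambda>w. P (P (f w)))"
    by (simp add: assms(3))
  also have "\<dots> = trace_op (\<lambda>w. P (f (P w)))"
    using trace_op_compose_commute[OF assms(1), of "\<lambda>w. P (f w)"] assms(1,2)
    by (simp add: linear_compose[unfolded o_def])
  finally show ?thesis
    by (simp add: assms(4) trace_op_def)
qed

definition orthogonal_projection :: "'a::euclidean_space set \<Rightarrow> 'a \<Rightarrow> 'a" where
  "orthogonal_projection S x = (SOME p. p \<in> S \<and> (\<forall>s\<in>S. (x - p) \<bullet> s = 0))"

context
  fixes S :: "'a::euclidean_space set"
  assumes S: "subspace S"
begin

lemma orthogonal_projection_works:
  "orthogonal_projection S x \<in> S \<and> (\<forall>s\<in>S. (x - orthogonal_projection S x) \<bullet> s = 0)"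
proof -
  obtain y z where "y \<in> span S" "\<And>w. w \<in> span S \<Longrightarrow> orthogonal z w" "x = y + z"
    using orthogonal_subspace_decomp_exists by blast
  moreover have "span S = S"
    using S by (simp add: span_eq_iff)
  ultimately have "\<exists>p. p \<in> S \<and> (\<forall>s\<in>S. (x - p) \<bullet> s = 0)"
    by (intro exI[of _ y]) (auto simp: orthogonal_def)
  then show ?thesis
    unfolding orthogonal_projection_def by (rule someI_ex)
qed

lemma orthogonal_projection_in: "orthogonal_projection S x \<in> S"
  using orthogonal_projection_works by blast

lemma orthogonal_projection_orthogonal: "s \<in> S \<Longrightarrow> (x - orthogonal_projection S x) \<bullet> s = 0"
  using orthogonal_projection_works by blast

lemma orthogonal_projection_unique:
  assumes "p \<in> S" "\<And>s. s \<in> S \<Longrightarrow> (x - p) \<bullet> s = 0"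
  shows "orthogonal_projection S x = p"
proof -
  let ?d = "orthogonal_projection S x - p"
  have "?d \<in> S"
    using S assms(1) orthogonal_projection_in by (simp add: subspace_diff)
  then have "?d \<bullet> ?d = (x - p) \<bullet> ?d - (x - orthogonal_projection S x) \<bullet> ?d"
    by (simp add: inner_diff_left)
  also have "\<dots> = 0"
    using \<open>?d \<in> S\<close> assms(2) orthogonal_projection_orthogonal by simp
  finally show ?thesis
    by simp
qed

lemma orthogonal_projection_id: "x \<in> S \<Longrightarrow> orthogonal_projection S x = x"
  by (rule orthogonal_projection_unique) auto

lemma orthogonal_projection_eq_0: "(\<And>s. s \<in> S \<Longrightarrow> x \<bullet> s = 0) \<Longrightarrow> orthogonal_projection S x = 0"
  by (rule orthogonal_projection_unique) (auto simp: subspace_0[OF S])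

lemma linear_orthogonal_projection: "linear (orthogonal_projection S)"
proof (rule linearI)
  fix x y
  let ?P = "orthogonal_projection S"
  have "(x + y - (?P x + ?P y)) \<bullet> s = (x - ?P x) \<bullet> s + (y - ?P y) \<bullet> s" for s
    by (simp add: algebra_simps inner_add_left inner_diff_left)
  then show "?P (x + y) = ?P x + ?P y"
    by (intro orthogonal_projection_unique)
      (simp_all add: subspace_add[OF S] orthogonal_projection_in orthogonal_projection_orthogonal)
next
  fix c x
  show "orthogonal_projection S (c *\<^sub>R x) = c *\<^sub>R orthogonal_projection S x"
    using orthogonal_projection_orthogonal[of _ x]
    by (intro orthogonal_projection_unique)
      (auto simp: subspace_scale[OF S] orthogonal_projection_in simp flip: scaleR_diff_right)
qed

end

lemma orthogonal_projection_compose_subspace: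
  assumes "subspace S" "subspace T" "T \<subseteq> S"
  shows "orthogonal_projection T (orthogonal_projection S x) = orthogonal_projection T x"
proof -
  have "orthogonal_projection T (x - orthogonal_projection S x) = 0"
    using assms orthogonal_projection_orthogonal
    by (intro orthogonal_projection_eq_0[OF assms(2)]) auto
  then show ?thesis
    using linear_orthogonal_projection[OF assms(2)] by (simp add: linear_diff)
qed

lemma trace_op_eq_0_if_lowers_filtration:
  fixes f :: "'a::euclidean_space \<Rightarrow> 'a" and C :: "nat \<Rightarrow> 'a set"
  assumes f: "linear f"
    and C: "\<And>j. subspace (C j)" "C 0 = UNIV" "C k = {0}" "\<And>j. C (Suc j) \<subseteq> C j"
    and f_lowers: "\<And>j x. x \<in> C j \<Longrightarrow> f x \<in> C (Suc j)"
  shows "trace_op f = 0"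
proof -
  define Q where "Q j = orthogonal_projection (C j)" for j
  have Q: "linear (Q j)" "Q j x \<in> C j" "x \<in> C j \<Longrightarrow> Q j x = x" for j x
    unfolding Q_def
    by (simp_all add: linear_orthogonal_projection orthogonal_projection_in orthogonal_projection_id C)
  have QQ: "Q (Suc j) (Q j x) = Q (Suc j) x" for j x
    unfolding Q_def by (rule orthogonal_projection_compose_subspace) (simp_all add: C)
  have step: "trace_op (\<lambda>w. Q j (f w)) = trace_op (\<lambda>w. Q (Suc j) (f w))" for j
  proof -
    define P where "P x = Q j x - Q (Suc j) x" for x
    \<comment> \<open>P is the orthogonal projection onto the complement of C (Suc j) in C j\<close>
    have P: "linear P"
      unfolding P_def using Q(1) by (intro linear_compose_sub)
    have P_range: "P x \<in> C j" for x
      unfolding P_def using Q(2) C(1,4) by (meson subsetD subspace_diff)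
    have P_kernel: "P x = 0" if "x \<in> C (Suc j)" for x
      unfolding P_def using that C(4) Q(3) by auto
    have "P (P x) = P x" for x
      using Q(3)[OF P_range[of x]] Q(1)[of "Suc j"] QQ[of j x] Q(3)[OF Q(2)[of "Suc j" x]]
      by (simp add: P_def linear_diff)
    moreover have "P (f (P x)) = 0" for x
      by (rule P_kernel[OF f_lowers[OF P_range]])
    ultimately have "trace_op (\<lambda>w. P (f w)) = 0"
      using P f by (intro trace_op_idempotent_compose_eq_0[of P f])
    then show ?thesis
      unfolding P_def by (simp add: trace_op_diff)
  qed
  have "trace_op f = trace_op (\<lambda>w. Q 0 (f w))"
    using Q(3) C(2) by simp
  also have "\<dots> = trace_op (\<lambda>w. Q k (f w))"
  proof (induction k)
    case (Suc m)
    show ?case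
      using Suc.IH step[of m] by (rule trans)
  qed simp
  also have "\<dots> = 0"
    using Q(2)[of k] C(3) by (simp add: trace_op_def)
  finally show ?thesis .
qed

section \<open>Nondegenerate symmetric bilinear forms\<close>

lemma nondegenerate_on_inter_orth_compl: "nondegenerate_on B S \<Longrightarrow> S \<inter> orth_compl B S \<subseteq> {0}"
  by (auto simp: nondegenerate_on_def orth_compl_def)

locale nondegenerate_form =
  fixes B :: "'a::euclidean_space \<Rightarrow> 'a \<Rightarrow> real"
  assumes bilinear_form: "bilinear B"
    and symmetric: "B x y = B y x"
    and nondegenerate: "(\<And>y. B x y = 0) \<Longrightarrow> x = 0"
begin

lemmas form_simps[simp] =
  bilinear_ladd[OF bilinear_form] bilinear_radd[OF bilinear_form]
  bilinear_lmul[OF bilinear_form] bilinear_rmul[OF bilinear_form]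
  bilinear_lneg[OF bilinear_form] bilinear_rneg[OF bilinear_form]
  bilinear_lzero[OF bilinear_form] bilinear_rzero[OF bilinear_form]
  bilinear_lsub[OF bilinear_form] bilinear_rsub[OF bilinear_form]

lemma form_eqI: "(\<And>w. B x w = B x' w) \<Longrightarrow> x = x'"
  using nondegenerate[of "x - x'"] by simp

lemma subspace_orth_compl: "subspace (orth_compl B S)"
  by (simp add: subspace_def orth_compl_def)

definition gram :: "'a \<Rightarrow> 'a" where
  "gram x = (\<Sum>c\<in>Basis. B x c *\<^sub>R c)"

lemma inner_gram: "gram x \<bullet> y = B x y"
proof -
  have "B x y = B x (\<Sum>c\<in>Basis. (y \<bullet> c) *\<^sub>R c)"
    by (simp add: euclidean_representation)
  also have "\<dots> = (\<Sum>c\<in>Basis. (y \<bullet> c) * B x c)"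
    using bilinear_form by (simp add: bilinear_def linear_sum)
  moreover have "gram x \<bullet> y = (\<Sum>c\<in>Basis. B x c * (c \<bullet> y))"
    by (simp add: gram_def inner_sum_left)
  ultimately show ?thesis
    by (simp add: inner_commute mult.commute)
qed

lemma linear_gram: "linear gram"
  by (rule linearI) (simp_all add: gram_def scaleR_add_left sum.distrib scaleR_sum_right)

lemma inj_gram: "inj gram"
  by (rule injI) (metis form_eqI inner_gram)

lemma surj_gram: "surj gram"
  using linear_gram inj_gram by (rule linear_inj_imp_surj)

lemma linear_functional_representable:
  assumes "linear \<phi>"
  obtains y where "\<And>x. B y x = \<phi> x"
proof -
  obtain y where "gram y = adjoint \<phi> 1"
    using surj_gram by (metis surjD)
  then have "B y x = \<phi> x" for x
    using adjoint_works[OF assms, of x 1] by (simp add: inner_gram[symmetric] inner_commute)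
  then show thesis
    by (rule that)
qed

lemma trace_op_transpose:
  assumes "linear M" "linear N" "\<And>a b. B (M a) b = B a (N b)"
  shows "trace_op N = trace_op M"
proof -
  obtain g where g: "linear g" "g \<circ> gram = id"
    using linear_injective_left_inverse[OF linear_gram inj_gram] by blast
  have g_gram: "g (gram x) = x" for x
    using g(2) by (metis comp_apply id_apply)
  have gram_g: "gram (g x) = x" for x
    using surj_gram g_gram by (metis surjD)
  have "trace_op N = trace_op (\<lambda>w. g (gram (N w)))"
    by (simp add: g_gram)
  also have "\<dots> = trace_op (\<lambda>w. gram (N (g w)))"
    using g(1) linear_gram assms(2)
    by (intro trace_op_compose_commute) (simp_all add: linear_compose[unfolded o_def])
  also have "\<dots> = (\<Sum>b\<in>Basis. B (M b) (g b))"
    by (simp add: trace_op_def inner_gram symmetric assms(3))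
  also have "\<dots> = (\<Sum>b\<in>Basis. gram (g b) \<bullet> M b)"
    by (simp add: inner_gram symmetric[of "M _"])
  also have "\<dots> = trace_op M"
    by (simp add: trace_op_def gram_g inner_commute)
  finally show ?thesis .
qed

lemma orth_compl_decomposition_exists:
  assumes S: "subspace S" and nondeg_S: "nondegenerate_on B S"
  obtains s where "s \<in> S" "x - s \<in> orth_compl B S"
proof -
  define \<Phi> where "\<Phi> s = orthogonal_projection S (gram s)" for s
  \<comment> \<open>\<Phi> s represents the restriction of B s to S, so \<Phi> is injective on S\<close>
  have \<Phi>: "linear \<Phi>"
    unfolding \<Phi>_def using linear_compose[OF linear_gram linear_orthogonal_projection[OF S]]
    by (simp add: o_def)
  have \<Phi>_eq_0: "x \<in> orth_compl B S" if "\<Phi> x = 0" for x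
    using orthogonal_projection_orthogonal[OF S, of _ "gram x"] that
    by (simp add: \<Phi>_def inner_gram orth_compl_def)
  have "inj_on \<Phi> S"
  proof (rule inj_onI)
    fix s t assume "s \<in> S" "t \<in> S" "\<Phi> s = \<Phi> t"
    then have "s - t \<in> S \<inter> orth_compl B S"
      using \<Phi>_eq_0[of "s - t"] \<Phi> S by (simp add: linear_diff subspace_diff)
    then show "s = t"
      using nondegenerate_on_inter_orth_compl[OF nondeg_S] by auto
  qed
  then have "inj_on \<Phi> (span S)"
    by (simp add: span_eq_iff[THEN iffD2, OF S])
  then have "dim (\<Phi> ` S) = dim S"
    by (rule eucl.dim_image_eq[OF \<Phi>])
  moreover have "\<Phi> ` S \<subseteq> S"
    unfolding \<Phi>_def using orthogonal_projection_in[OF S] by auto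
  ultimately have \<Phi>_S: "\<Phi> ` S = S"
    using S \<Phi> by (intro subspace_dim_equal) (simp_all add: linear_subspace_image)
  have "\<Phi> x \<in> \<Phi> ` S"
    unfolding \<Phi>_S by (simp add: \<Phi>_def orthogonal_projection_in[OF S])
  then obtain s where s: "s \<in> S" "\<Phi> s = \<Phi> x"
    by (metis imageE)
  have "x - s \<in> orth_compl B S"
    using s \<Phi> by (intro \<Phi>_eq_0) (simp add: linear_diff)
  with s(1) show thesis
    by (rule that)
qed

lemma orth_compl_decomposition:
  assumes S: "subspace S" and nondeg_S: "nondegenerate_on B S"
  shows "\<exists>!s. s \<in> S \<and> x - s \<in> orth_compl B S"
proof -
  obtain s where s: "s \<in> S" "x - s \<in> orth_compl B S"
    using orth_compl_decomposition_exists[OF assms] .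
  moreover have "t = s" if "t \<in> S" "x - t \<in> orth_compl B S" for t
    using nondegenerate_on_inter_orth_compl[OF nondeg_S] subspace_diff[OF S s(1) that(1)]
      subspace_diff[OF subspace_orth_compl that(2) s(2)]
    by auto
  ultimately show ?thesis
    by blast
qed

lemma separating_vector:
  assumes V: "subspace V" and "z \<notin> V"
  obtains y where "\<And>v. v \<in> V \<Longrightarrow> B y v = 0" and "B y z \<noteq> 0"
proof -
  let ?d = "\<lambda>x. x - orthogonal_projection V x"
  have lin: "linear (\<lambda>x. ?d x \<bullet> ?d z)"
    using linear_orthogonal_projection[OF V]
    by (intro linearI) (simp_all add: linear_add linear_scale algebra_simps inner_add_left
        flip: scaleR_diff_right)
  obtain y where y: "\<And>x. B y x = ?d x \<bullet> ?d z"
    using linear_functional_representable[OF lin] by blast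
  have "B y v = 0" if "v \<in> V" for v
    using y orthogonal_projection_id[OF V that] by simp
  moreover have "?d z \<noteq> 0"
    using assms(2) orthogonal_projection_in[OF V, of z] by auto
  then have "B y z \<noteq> 0"
    using y by simp
  ultimately show thesis
    by (rule that)
qed

end

section \<open>The Levi-Civita product and the Ricci operator\<close>

lemma lie_algebra_bracket_swap:
  assumes "lie_algebra br"
  shows "br y x = - br x y"
proof -
  have br: "bilinear br" "\<And>x. br x x = 0"
    using assms by (simp_all add: lie_algebra_def)
  have "br (x + y) (x + y) = 0"
    by (rule br(2))
  then show ?thesis
    using br(2)[of x] br(2)[of y]
    by (simp add: bilinear_ladd[OF br(1)] bilinear_radd[OF br(1)] eq_neg_iff_add_eq_0 add.commute)
qed

locale metric_lie_algebra = nondegenerate_form B for B :: "'a::euclidean_space \<Rightarrow> 'a \<Rightarrow> real" +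
  fixes br :: "'a \<Rightarrow> 'a \<Rightarrow> 'a"
  assumes lie_algebra: "lie_algebra br"
begin

lemma bilinear_bracket: "bilinear br"
  using lie_algebra by (simp add: lie_algebra_def)

lemmas bracket_simps[simp] =
  bilinear_ladd[OF bilinear_bracket] bilinear_radd[OF bilinear_bracket]
  bilinear_lmul[OF bilinear_bracket] bilinear_rmul[OF bilinear_bracket]
  bilinear_lneg[OF bilinear_bracket] bilinear_rneg[OF bilinear_bracket]
  bilinear_lzero[OF bilinear_bracket] bilinear_rzero[OF bilinear_bracket]
  bilinear_lsub[OF bilinear_bracket] bilinear_rsub[OF bilinear_bracket]

lemmas bracket_swap = lie_algebra_bracket_swap[OF lie_algebra]

abbreviation L :: "'a \<Rightarrow> 'a \<Rightarrow> 'a" where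
  "L \<equiv> levi_civita br B"

lemma levi_civita_characterization:
  "2 * B (L u v) w = B (br u v) w + B (br w u) v + B (br w v) u"
proof -
  let ?rhs = "\<lambda>w. B (br u v) w + B (br w u) v + B (br w v) u"
  have "linear (\<lambda>w. ?rhs w / 2)"
    by (rule linearI) (simp_all add: field_simps)
  then obtain y where y: "\<And>w. B y w = ?rhs w / 2"
    using linear_functional_representable by blast
  have "\<forall>w. 2 * B (L u v) w = ?rhs w"
    unfolding levi_civita_def
  proof (rule theI)
    show "\<forall>w. 2 * B y w = ?rhs w"
      by (simp add: y)
    show "x = y" if "\<forall>w. 2 * B x w = ?rhs w" for x
      by (intro form_eqI) (simp add: y that[rule_format, symmetric])
  qed
  then show ?thesis
    by blast
qed

lemma levi_civita_eq: "B (L u v) w = (B (br u v) w + B (br w u) v + B (br w v) u) / 2"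
  using levi_civita_characterization[of u v w] by simp

lemma levi_civita_add_right[simp]: "L u (v + v') = L u v + L u v'"
  by (rule form_eqI) (simp add: levi_civita_eq field_simps)

lemma levi_civita_scaleR_right[simp]: "L u (c *\<^sub>R v) = c *\<^sub>R L u v"
  by (rule form_eqI) (simp add: levi_civita_eq field_simps)

lemma levi_civita_diff_right[simp]: "L u (v - v') = L u v - L u v'"
  by (rule form_eqI) (simp add: levi_civita_eq field_simps)

lemma levi_civita_zero_left[simp]: "L 0 v = 0"
  by (rule form_eqI) (simp add: levi_civita_eq)

lemma linear_levi_civita: "linear (L u)"
  by (rule linearI) simp_all

lemma levi_civita_torsion_free: "L u v = L v u + br u v"
  by (rule form_eqI) (simp add: levi_civita_eq field_simps bracket_swap[of u v])

lemma levi_civita_skew: "B (L x a) b = - B a (L x b)"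
proof -
  have "B (L x a) b + B (L x b) a = 0"
    unfolding levi_civita_eq using bracket_swap[of x a] bracket_swap[of x b] bracket_swap[of b a]
    by (simp add: field_simps)
  then show ?thesis
    by (simp add: symmetric[of a] eq_neg_iff_add_eq_0)
qed

lemma trace_op_levi_civita: "trace_op (L x) = 0"
proof -
  have "trace_op (\<lambda>w. - L x w) = trace_op (L x)"
    using linear_levi_civita
    by (intro trace_op_transpose) (simp_all add: levi_civita_skew linear_compose_neg)
  then show ?thesis
    by (simp add: trace_op_uminus)
qed

lemma ricci_characterization: "B (ricci br B u) v = trace_op (\<lambda>w. curvature br B u w v)"
proof -
  let ?rhs = "\<lambda>v. trace_op (\<lambda>w. curvature br B u w v)"
  have "linear ?rhs"
    by (rule linearI)
      (simp_all add: curvature_def algebra_simps trace_op_add trace_op_diff trace_op_scaleR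
        flip: scaleR_diff_right)
  then obtain y where y: "\<And>v. B y v = ?rhs v"
    using linear_functional_representable by blast
  have "\<forall>v. B (ricci br B u) v = ?rhs v"
    unfolding ricci_def
  proof (rule theI)
    show "\<forall>v. B y v = ?rhs v"
      by (simp add: y)
    show "x = y" if "\<forall>v. B x v = ?rhs v" for x
      using that by (intro form_eqI) (simp add: y)
  qed
  then show ?thesis
    by blast
qed

lemma trace_op_levi_civita_compose:
  assumes y: "\<And>a b. B y (br a b) = 0"
  shows "trace_op (\<lambda>w. L z (L y w)) = trace_op (\<lambda>w. L z (br y w))"
proof -
  define R where "R w = 2 *\<^sub>R L y w - br y w" for w
  have R: "linear R"
    unfolding R_def by (rule linearI) (simp_all add: algebra_simps)
  have R_transpose: "B (R a) c = - B a (br y c)" for a c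
  proof -
    have "B (R a) c = B (br c y) a + B (br c a) y"
      unfolding R_def using levi_civita_characterization[of y a c] by (simp add: algebra_simps)
    then show ?thesis
      using y[of c a] by (simp add: symmetric[of _ a] symmetric[of _ y] bracket_swap[of c y])
  qed
  have ad: "linear (br y)"
    using bilinear_bracket by (simp add: bilinear_def)
  have "trace_op (\<lambda>w. br y (L z w)) = trace_op (\<lambda>w. L z (R w))"
    using linear_levi_civita ad R
    by (intro trace_op_transpose)
      (simp_all add: linear_compose[unfolded o_def] levi_civita_skew R_transpose)
  also have "\<dots> = 2 * trace_op (\<lambda>w. L z (L y w)) - trace_op (\<lambda>w. L z (br y w))"
    by (simp add: R_def trace_op_diff trace_op_scaleR)
  finally show ?thesis
    using trace_op_compose_commute[OF ad linear_levi_civita] by simp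
qed

lemma ricci_center_orthogonal_derived:
  assumes unimodular: "\<And>x. trace_op (\<lambda>w. br w x) = 0"
    and z: "z \<in> lie_center br" and y: "\<And>a b. B y (br a b) = 0"
  shows "B (ricci br B z) y = 0"
proof -
  have z_central: "br z w = 0" for w
    using z by (simp add: lie_center_def)
  let ?x = "L z y"
  have "curvature br B z w y = - L z (L y w) + L z (br y w) + L ?x w + br w ?x" for w
    using levi_civita_torsion_free[of w y] levi_civita_torsion_free[of w ?x] bracket_swap[of w y]
    by (simp add: curvature_def z_central)
  then have "trace_op (\<lambda>w. curvature br B z w y) =
      - trace_op (\<lambda>w. L z (L y w)) + trace_op (\<lambda>w. L z (br y w)) + trace_op (L ?x)
      + trace_op (\<lambda>w. br w ?x)"
    by (simp add: trace_op_add trace_op_diff)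
  also have "\<dots> = 0"
    by (simp add: trace_op_levi_civita_compose[OF y] trace_op_levi_civita unimodular)
  finally show ?thesis
    by (simp add: ricci_characterization)
qed

end

section \<open>Nilpotent Lie algebras and exact cocycles\<close>

lemma subspace_lower_central: "subspace (lower_central br j)"
  by (cases j) (simp_all add: subspace_UNIV subspace_span)

lemma lower_central_Suc_subset: "lower_central br (Suc j) \<subseteq> lower_central br j"
proof (induction j)
  case (Suc j)
  then have "{br x y | x y. y \<in> lower_central br (Suc j)} \<subseteq> {br x y | x y. y \<in> lower_central br j}"
    by blast
  then show ?case
    by (simp only: lower_central.simps) (rule span_mono)
qed simp

lemma bracket_in_lower_central_Suc: "y \<in> lower_central br j \<Longrightarrow> br x y \<in> lower_central br (Suc j)"
  by (auto intro: span_base)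

lemma nilpotent_lie_unimodular:
  assumes "nilpotent_lie br"
  shows "trace_op (\<lambda>w. br w x) = 0"
proof -
  have lie: "lie_algebra br"
    using assms by (simp add: nilpotent_lie_def)
  obtain k where k: "lower_central br k = {0}"
    using assms by (auto simp: nilpotent_lie_def)
  have "linear (br x)"
    using lie by (simp add: lie_algebra_def bilinear_def)
  then have "trace_op (br x) = 0"
    using subspace_lower_central _ k lower_central_Suc_subset bracket_in_lower_central_Suc
    by (rule trace_op_eq_0_if_lowers_filtration) simp
  then show ?thesis
    by (simp add: lie_algebra_bracket_swap[OF lie, of _ x] trace_op_uminus)
qed

lemma nilpotent_lie_center_nontrivial:
  fixes br :: "'a::euclidean_space \<Rightarrow> 'a \<Rightarrow> 'a"
  assumes "nilpotent_lie br"
  obtains z where "z \<in> lie_center br" "z \<noteq> 0"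
proof -
  have lie: "lie_algebra br"
    using assms by (simp add: nilpotent_lie_def)
  define m where "m = (LEAST k. lower_central br k = {0})"
  have m: "lower_central br m = {0}"
    unfolding m_def by (rule LeastI_ex) (use assms in \<open>simp add: nilpotent_lie_def\<close>)
  obtain b :: 'a where "b \<in> Basis"
    using nonempty_Basis by blast
  then have "(UNIV :: 'a set) \<noteq> {0}"
    by auto
  then obtain j where j: "m = Suc j"
    using m by (cases m) auto
  then have "j < m"
    by simp
  then have "lower_central br j \<noteq> {0}"
    unfolding m_def by (rule not_less_Least)
  then obtain z where z: "z \<in> lower_central br j" "z \<noteq> 0"
    using subspace_0[OF subspace_lower_central] by blast
  \<comment> \<open>the last nonzero term of the lower central series is central\<close>
  have "br z x = 0" for x
    using bracket_in_lower_central_Suc[OF z(1), of x] m j lie_algebra_bracket_swap[OF lie, of z x]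
    by simp
  then have "z \<in> lie_center br"
    by (simp add: lie_center_def)
  then show thesis
    using z(2) by (rule that)
qed

lemma lorentzian_nondegenerate_form:
  assumes "lorentzian B"
  shows "nondegenerate_form B"
proof
  obtain T :: "'a \<Rightarrow> 'a" and b0 where T: "linear T" "bij T" "b0 \<in> Basis"
    and B_T: "\<And>x y. B (T x) (T y) = x \<bullet> y - 2 * (x \<bullet> b0) * (y \<bullet> b0)"
    using assms unfolding lorentzian_def by blast
  show "bilinear B" "B x y = B y x" for x y
    using assms by (simp_all add: lorentzian_def)
  fix x assume x: "\<And>y. B x y = 0"
  obtain x' where x': "x = T x'"
    using T(2) by (metis bij_pointE)
  \<comment> \<open>reflecting x' in the time-like direction b0 turns B into the inner product\<close>
  have "B (T x') (T (x' - (2 * (x' \<bullet> b0)) *\<^sub>R b0)) = x' \<bullet> x'"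
    unfolding B_T using T(3) by (simp add: inner_diff_right inner_diff_left algebra_simps)
  then have "x' = 0"
    using x x' by simp
  then show "x = 0"
    using x' T(1) by (simp add: linear_0)
qed

lemma linear_on_set_id_minus: "linear_on_set N \<alpha> \<Longrightarrow> linear_on_set N (\<lambda>x. x - \<alpha> x)"
  by (simp add: linear_on_set_def algebra_simps)

lemma subspace_image_linear_on_set:
  assumes N: "subspace N" and f: "linear_on_set N f"
  shows "subspace (f ` N)"
  unfolding subspace_def
proof (intro conjI ballI allI)
  have "f 0 = 0"
    using f subspace_0[OF N] unfolding linear_on_set_def by (metis scaleR_zero_left)
  then show "0 \<in> f ` N"
    using subspace_0[OF N] by (metis image_eqI)
next
  fix u v assume "u \<in> f ` N" "v \<in> f ` N"
  then obtain x y where "x \<in> N" "y \<in> N" "u = f x" "v = f y"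
    by blast
  then show "u + v \<in> f ` N"
    using f subspace_add[OF N] unfolding linear_on_set_def by (metis image_eqI)
next
  fix c u assume "u \<in> f ` N"
  then obtain x where "x \<in> N" "u = f x"
    by blast
  then show "c *\<^sub>R u \<in> f ` N"
    using f subspace_scale[OF N] unfolding linear_on_set_def by (metis image_eqI)
qed

lemma graph_inter_complement_trivial:
  assumes "subspace S" "subspace N" "S \<inter> N \<subseteq> {0}"
    and "linear_on_set N \<alpha>" "\<alpha> ` N \<subseteq> S"
  shows "S \<inter> (\<lambda>g. g - \<alpha> g) ` N \<subseteq> {0}"
proof
  fix z assume "z \<in> S \<inter> (\<lambda>g. g - \<alpha> g) ` N"
  then obtain g where z: "z \<in> S" and g: "g \<in> N" "z = g - \<alpha> g"
    by blast
  then have "g = z + \<alpha> g"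
    by simp
  then have "g \<in> S"
    using assms(1,5) z g(1) by (metis image_subset_iff subspace_add)
  then have "g = 0"
    using assms(3) g(1) by blast
  moreover have "\<alpha> 0 = 0"
    using assms(4) subspace_0[OF assms(2)] unfolding linear_on_set_def by (metis scaleR_zero_left)
  ultimately show "z \<in> {0}"
    using g(2) by simp
qed

context metric_lie_algebra
begin

lemma subspace_lie_center: "subspace (lie_center br)"
  by (simp add: subspace_def lie_center_def)

lemma center_part_decomposition:
  assumes "nondegenerate_on B (lie_center br)"
  shows "center_part br B x \<in> lie_center br"
    and "x - center_part br B x \<in> orth_compl B (lie_center br)"
  using theI'[OF orth_compl_decomposition[OF subspace_lie_center assms, of x]]
  by (simp_all add: center_part_def)

lemma bracket_in_coboundary_graph:
  assumes "nondegenerate_on B (lie_center br)"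
    and \<alpha>: "\<forall>u\<in>orth_compl B (lie_center br). \<forall>v\<in>orth_compl B (lie_center br).
      omega_cocycle br B u v = - \<alpha> (bracket_g br B u v)"
  shows "br a b \<in> (\<lambda>g. g - \<alpha> g) ` orth_compl B (lie_center br)"
proof -
  let ?cp = "center_part br B" and ?N = "orth_compl B (lie_center br)"
  have central: "br (?cp x) w = 0" "br w (?cp x) = 0" for x w
    using center_part_decomposition(1)[OF assms(1), of x] bracket_swap[of w "?cp x"]
    by (simp_all add: lie_center_def)
  let ?g = "bracket_g br B (a - ?cp a) (b - ?cp b)"
  have "br a b = br (a - ?cp a) (b - ?cp b)"
    by (simp add: central)
  also have "\<dots> = ?g + omega_cocycle br B (a - ?cp a) (b - ?cp b)"
    by (simp add: bracket_g_def omega_cocycle_def)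
  also have "\<dots> = ?g - \<alpha> ?g"
    using \<alpha> center_part_decomposition(2)[OF assms(1)] by simp
  finally have "br a b = ?g - \<alpha> ?g" .
  moreover have "?g \<in> ?N"
    using center_part_decomposition(2)[OF assms(1)] by (simp add: bracket_g_def)
  ultimately show ?thesis
    by (rule image_eqI)
qed

end

theorem proposition3p4:
  fixes br :: "'a::euclidean_space \<Rightarrow> 'a \<Rightarrow> 'a"
    and B :: "'a \<Rightarrow> 'a \<Rightarrow> real"
    and lam :: real
  assumes "nilpotent_lie br"
    and "lorentzian B"
    and "nondegenerate_on B (lie_center br)"
    and "einstein br B lam"
    and "lam \<noteq> 0"
  shows "\<not> (\<exists>\<alpha>. linear_on_set (orth_compl B (lie_center br)) \<alpha> \<and>
              (\<forall>u\<in>orth_compl B (lie_center br). \<alpha> u \<in> lie_center br) \<and>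
              (\<forall>u\<in>orth_compl B (lie_center br). \<forall>v\<in>orth_compl B (lie_center br).
                 omega_cocycle br B u v = - \<alpha> (bracket_g br B u v)))"
proof
  let ?Z = "lie_center br" and ?N = "orth_compl B (lie_center br)"
  assume "\<exists>\<alpha>. linear_on_set ?N \<alpha> \<and> (\<forall>u\<in>?N. \<alpha> u \<in> ?Z) \<and>
    (\<forall>u\<in>?N. \<forall>v\<in>?N. omega_cocycle br B u v = - \<alpha> (bracket_g br B u v))"
  then obtain \<alpha> where \<alpha>: "linear_on_set ?N \<alpha>" "\<alpha> ` ?N \<subseteq> ?Z"
    and coboundary: "\<forall>u\<in>?N. \<forall>v\<in>?N. omega_cocycle br B u v = - \<alpha> (bracket_g br B u v)"
    by blast
  interpret metric_lie_algebra B br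
    using lorentzian_nondegenerate_form[OF assms(2)] assms(1)
    by (simp add: metric_lie_algebra_def metric_lie_algebra_axioms_def nilpotent_lie_def)
  obtain z where z: "z \<in> ?Z" "z \<noteq> 0"
    using nilpotent_lie_center_nontrivial[OF assms(1)] .
  have "z \<notin> (\<lambda>g. g - \<alpha> g) ` ?N"
    using graph_inter_complement_trivial[OF subspace_lie_center subspace_orth_compl
        nondegenerate_on_inter_orth_compl[OF assms(3)] \<alpha>] z
    by blast
  moreover have "subspace ((\<lambda>g. g - \<alpha> g) ` ?N)"
    using subspace_orth_compl linear_on_set_id_minus[OF \<alpha>(1)] by (rule subspace_image_linear_on_set)
  ultimately obtain y where y: "\<And>v. v \<in> (\<lambda>g. g - \<alpha> g) ` ?N \<Longrightarrow> B y v = 0" and "B y z \<noteq> 0"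
    using separating_vector by blast
  have "B (ricci br B z) y = 0"
    using nilpotent_lie_unimodular[OF assms(1)] z(1)
      y[OF bracket_in_coboundary_graph[OF assms(3) coboundary]]
    by (rule ricci_center_orthogonal_derived)
  then have "lam * B y z = 0"
    using assms(4) by (simp add: einstein_def symmetric)
  then show False
    using assms(5) \<open>B y z \<noteq> 0\<close> by simp
qed

end
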